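(* Let $P=\bigcup_{i=1}^n I_i$, $I_i=[p_{i-1},p_i]$, be a simple closed $n$-gon in $\mathbb{R}^2$ ($n\ge3$, indices modulo $n$). For $1\le i\le n$ let $u_i$ be the unit normal to $\mathrm{aff}\,I_i$ oriented so that for every $b\in\mathrm{relint}\,I_i$ and all sufficiently small $\varepsilon>0$, $b+\varepsilon u_i\in\mathrm{ext}P$ and $b-\varepsilon u_i\in\mathrm{int}P$; put $u_{i,i+1}=u_i+u_{i+1}$. (a) Fix $i$, $1\le i\le n$, let $b\in\mathrm{relint}\,I_i$ and let $u$ be a vector with $\langle u,u_i\rangle>0$. For real $\varepsilon$ put $I^\varepsilon=[b+\varepsilon u,\ p_i+\varepsilon u_{i,i+1}]$. Then for every sufficiently small $\varepsilon>0$ (how small may depend on $b$ and $u$), $I^\varepsilon\subset\mathrm{ext}P$ and $I^{-\varepsilon}\subset\mathrm{int}P$. (b) Fix $i$, $1\le i\le n$, and for real $\varepsilon$ put $J^\varepsilon=[p_i+\varepsilon u_{i,i+1},\ p_{i+1}+\varepsilon u_{i+1,i+2}]$. Then for every sufficiently small $\varepsilon>0$, $J^\varepsilon\subset\mathrm{ext}P$ and $J^{-\varepsilon}\subset\mathrm{int}P$.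
   Context: A simple closed $n$-gon is a polygon $P=\bigcup_{i=1}^n[p_{i-1},p_i]$ with $n$ distinct vertices, $p_n=p_0$, whose edges intersect only in the common endpoints of consecutive edges. $\mathbb{R}^2\setminus P$ has exactly two components: the bounded one $\mathrm{int}P$ and the unbounded one $\mathrm{ext}P$. $[x,y]$ denotes the closed segment, $\mathrm{relint}$ relative interior, $\mathrm{aff}$ affine hull. *)

theory Defs
  imports "HOL-Analysis.Analysis"
begin

text \<open>A polygon with vertices p 0, ..., p (n-1), indices taken modulo n
  (p is assumed n-periodic where used).  Edge I_i = [p (i-1), p i] for 1 <= i <= n.\<close>

definition polygon_edge :: "(nat \<Rightarrow> real^2) \<Rightarrow> nat \<Rightarrow> (real^2) set" where
  "polygon_edge p i = closed_segment (p (i - 1)) (p i)"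

definition polygon :: "nat \<Rightarrow> (nat \<Rightarrow> real^2) \<Rightarrow> (real^2) set" where
  "polygon n p = (\<Union>i\<in>{1..n}. polygon_edge p i)"

definition simple_closed_polygon :: "nat \<Rightarrow> (nat \<Rightarrow> real^2) \<Rightarrow> bool" where
  "simple_closed_polygon n p \<longleftrightarrow>
     n \<ge> 3 \<and> (\<forall>i. p (i + n) = p i) \<and> inj_on p {0..<n} \<and>
     (\<forall>i\<in>{1..n}. \<forall>j\<in>{1..n}. i \<noteq> j \<longrightarrow>
        polygon_edge p i \<inter> polygon_edge p j \<subseteq> {p (i - 1), p i} \<inter> {p (j - 1), p j})"

end

theory Submission
  imports Defs
begin

text \<open>Near a compact part of an edge, or near a vertex, the polygon consists only of the incident
  edges. At a vertex \<open>p\<^sub>k\<close> a small open wedge bounded by the lines of \<open>I\<^sub>k\<close> and \<open>I\<^sub>k\<^sub>+\<^sub>1\<close> therefore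
  misses P and lies on one side of it. Pushing points of the two edges off along their normals into
  such a wedge shows that the normals are coherently oriented: they are never opposite, and the
  direction of one edge has the sign relation with the other edge's normal that a consistent
  orientation forces. Hence \<open>u\<^sub>k + u\<^sub>k\<^sub>+\<^sub>1\<close> points strictly to the \<open>u\<^sub>k\<close>-side of \<open>aff I\<^sub>k\<close> and to the
  \<open>u\<^sub>k\<^sub>+\<^sub>1\<close>-side of \<open>aff I\<^sub>k\<^sub>+\<^sub>1\<close>, and a sign computation shows that for small \<open>\<epsilon> \<noteq> 0\<close> the segments
  \<open>I\<^sup>\<epsilon>\<close> and \<open>J\<^sup>\<epsilon>\<close> miss every nearby edge, hence P. Being connected to points \<open>b \<plusminus> \<epsilon> u\<^sub>k\<close>, which
  lie in \<open>ext P\<close> resp. \<open>int P\<close>, they lie there as well.\<close>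

section \<open>Periodic indices\<close>

lemma periodic_add_mult:
  fixes f :: "nat \<Rightarrow> 'a" and n i k :: nat
  assumes "\<forall>i. f (i + n) = f i"
  shows "f (i + k * n) = f i"
proof (induction k)
  case (Suc k)
  then show ?case using assms by (metis add.assoc add.commute mult_Suc)
qed simp

lemma periodic_mod:
  fixes f :: "nat \<Rightarrow> 'a" and n m :: nat
  assumes "\<forall>i. f (i + n) = f i"
  shows "f (m mod n) = f m"
  using periodic_add_mult[OF assms, of "m mod n" "m div n"] by (simp add: mod_div_mult_eq)

lemma mod_diff1_cong:
  fixes j k n :: nat
  assumes "1 \<le> j" "1 \<le> k" "j mod n = k mod n"
  shows "(j - 1) mod n = (k - 1) mod n"
proof (cases "n = 0")
  case False
  have "(i - 1) mod n = (i mod n + (n - 1)) mod n" if "1 \<le> i" for i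
  proof -
    have "(i - 1) mod n = (i - 1 + n) mod n" by simp
    also have "i - 1 + n = i + (n - 1)" using that False by simp
    finally show ?thesis by (simp add: mod_add_left_eq)
  qed
  then show ?thesis using assms by metis
qed (use assms in simp)

section \<open>Planar segments, rays and wedges\<close>

text \<open>In the plane, d and e are both orthogonal to \<open>a \<noteq> 0\<close> and hence parallel.\<close>
lemma orthogonal_transfer_2:
  fixes a c d e :: "real^2"
  assumes "a \<noteq> 0" "e \<noteq> 0" "a \<bullet> d = 0" "e \<bullet> a = 0" "c \<bullet> e = 0"
  shows "c \<bullet> d = 0"
proof -
  have inner2: "x \<bullet> y = x$1 * y$1 + x$2 * y$2" for x y :: "real^2"
    by (simp add: inner_vec_def sum_2)
  have nz: "x$1 \<noteq> 0 \<or> x$2 \<noteq> 0" if "x \<noteq> 0" for x :: "real^2"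
    using that by (metis exhaust_2 vec_eq_iff zero_index)
  have "a$1 * (d$1 * e$2 - d$2 * e$1) = 0" "a$2 * (d$1 * e$2 - d$2 * e$1) = 0"
    using assms(3,4) unfolding inner2 by algebra+
  then have de: "d$1 * e$2 = d$2 * e$1" using nz[OF assms(1)] by auto
  have "e$1 * (c \<bullet> d) = 0" "e$2 * (c \<bullet> d) = 0"
    using assms(5) de unfolding inner2 by algebra+
  then show ?thesis using nz[OF assms(2)] by auto
qed

lemma connected_subset_outside:
  assumes "connected C" "C \<inter> S = {}" "x \<in> C" "x \<in> outside S"
  shows "C \<subseteq> outside S"
  using assms outside_same_component unfolding connected_component_def by blast

lemma connected_subset_inside:
  assumes "connected C" "C \<inter> S = {}" "x \<in> C" "x \<in> inside S"
  shows "C \<subseteq> inside S"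
  using assms inside_same_component unfolding connected_component_def by blast

lemma eventually_at_0_both_sides:
  "eventually P (at (0::real)) \<Longrightarrow> \<forall>\<^sub>F \<epsilon> in at_right 0. P \<epsilon> \<and> P (- \<epsilon>)"
  by (simp add: eventually_at_split eventually_at_left_to_right eventually_conj)

lemma eventually_abs_mult_less:
  "0 < B \<Longrightarrow> \<forall>\<^sub>F \<epsilon> in at (0::real). \<bar>\<epsilon>\<bar> * C < B"
proof -
  assume "0 < B"
  have "((\<lambda>\<epsilon>. \<bar>\<epsilon>\<bar> * C) \<longlongrightarrow> \<bar>0\<bar> * C) (at (0::real))"
    by (intro tendsto_intros)
  then show ?thesis using \<open>0 < B\<close> order_tendstoD(2) by fastforce
qed

lemma eventually_nonzero_at_0: "\<forall>\<^sub>F \<epsilon> in at (0::real). \<epsilon> \<noteq> 0"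
  by (simp add: eventually_at_filter)

lemma eventually_affine_pos:
  fixes l A B :: real
  assumes "0 < l" "0 < A \<or> A = 0 \<and> 0 < B"
  shows "\<forall>\<^sub>F \<eta> in at_right 0. 0 < l * A + \<eta> * B"
proof (cases "A = 0")
  case True
  then show ?thesis using assms
    by (auto intro: eventually_mono[OF eventually_at_right_less])
next
  case False
  then have "0 < l * A" using assms by simp
  moreover have "((\<lambda>\<eta>. l * A + \<eta> * B) \<longlongrightarrow> l * A + 0 * B) (at_right 0)"
    by (intro tendsto_intros)
  ultimately show ?thesis using order_tendstoD(1) by fastforce
qed

lemma closed_segment_subset_ray:
  "closed_segment a b \<subseteq> {a + l *\<^sub>R (b - a) | l. 0 \<le> l}"
  by (auto simp: in_segment algebra_simps)

lemma shifted_closed_segment_near: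
  fixes x0 x1 z0 z1 :: "'a::real_normed_vector"
  assumes "x \<in> closed_segment (x0 + \<epsilon> *\<^sub>R z0) (x1 + \<epsilon> *\<^sub>R z1)"
  shows "\<exists>y\<in>closed_segment x0 x1. dist y x \<le> \<bar>\<epsilon>\<bar> * (norm z0 + norm z1)"
proof -
  obtain t where t: "0 \<le> t" "t \<le> 1" "x = (1 - t) *\<^sub>R (x0 + \<epsilon> *\<^sub>R z0) + t *\<^sub>R (x1 + \<epsilon> *\<^sub>R z1)"
    using assms unfolding in_segment by blast
  define y where "y = (1 - t) *\<^sub>R x0 + t *\<^sub>R x1"
  have "y \<in> closed_segment x0 x1" unfolding y_def in_segment using t by blast
  moreover have "x - y = \<epsilon> *\<^sub>R ((1 - t) *\<^sub>R z0 + t *\<^sub>R z1)"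
    by (simp add: t(3) y_def algebra_simps)
  then have "dist y x = \<bar>\<epsilon>\<bar> * norm ((1 - t) *\<^sub>R z0 + t *\<^sub>R z1)"
    by (simp add: dist_norm norm_minus_commute[of y])
  moreover have "norm ((1 - t) *\<^sub>R z0 + t *\<^sub>R z1) \<le> norm z0 + norm z1"
    using norm_triangle_ineq[of "(1 - t) *\<^sub>R z0" "t *\<^sub>R z1"] t
    by (smt (verit) mult_left_le_one_le norm_ge_zero norm_scaleR)
  ultimately show ?thesis by (metis abs_ge_zero mult_left_mono)
qed

lemma shifted_segment_off_line:
  fixes q m x0 x1 z0 z1 :: "'a::real_inner"
  assumes "(x0 - q) \<bullet> m = 0" "(x1 - q) \<bullet> m = 0" "0 < z0 \<bullet> m" "0 < z1 \<bullet> m"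
  shows "\<forall>\<^sub>F \<epsilon> in at 0. closed_segment (x0 + \<epsilon> *\<^sub>R z0) (x1 + \<epsilon> *\<^sub>R z1) \<inter> {y. (y - q) \<bullet> m = 0} = {}"
  using eventually_nonzero_at_0
proof (rule eventually_mono)
  fix \<epsilon> :: real assume "\<epsilon> \<noteq> 0"
  define H where "H = {y. (\<epsilon> *\<^sub>R m) \<bullet> q < (\<epsilon> *\<^sub>R m) \<bullet> y}"
  have "x + \<epsilon> *\<^sub>R z \<in> H" if "(x - q) \<bullet> m = 0" "0 < z \<bullet> m" for x z
  proof -
    have "(\<epsilon> *\<^sub>R m) \<bullet> (x + \<epsilon> *\<^sub>R z) - (\<epsilon> *\<^sub>R m) \<bullet> q = (\<epsilon> * \<epsilon>) * (z \<bullet> m)"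
      using that(1) by (simp add: inner_diff_left inner_add_right inner_commute[of m] algebra_simps)
    moreover have "0 < (\<epsilon> * \<epsilon>) * (z \<bullet> m)" using that(2) \<open>\<epsilon> \<noteq> 0\<close> by (metis mult_pos_pos not_real_square_gt_zero)
    ultimately show ?thesis unfolding H_def mem_Collect_eq by linarith
  qed
  then have "x0 + \<epsilon> *\<^sub>R z0 \<in> H" "x1 + \<epsilon> *\<^sub>R z1 \<in> H" using assms by blast+
  then have "closed_segment (x0 + \<epsilon> *\<^sub>R z0) (x1 + \<epsilon> *\<^sub>R z1) \<subseteq> H"
    using convex_halfspace_gt[of "(\<epsilon> *\<^sub>R m) \<bullet> q" "\<epsilon> *\<^sub>R m"]
    by (simp only: H_def closed_segment_subset)
  moreover have "H \<inter> {y. (y - q) \<bullet> m = 0} = {}"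
    by (auto simp: H_def inner_diff_left inner_commute[of m])
  ultimately show "closed_segment (x0 + \<epsilon> *\<^sub>R z0) (x1 + \<epsilon> *\<^sub>R z1) \<inter> {y. (y - q) \<bullet> m = 0} = {}"
    by blast
qed

lemma convex_combination_pos:
  fixes t A B :: real
  assumes "0 \<le> t" "t \<le> 1" "0 < A" "0 < B"
  shows "0 < (1 - t) * A + t * B"
  using assms by (smt (verit) mult_nonneg_nonneg mult_pos_pos)

text \<open>Pairing with m forces the ray parameter to have the sign of \<open>\<epsilon> (h \<bullet> m)\<close>; then, by the sign
  hypotheses, every point of the segment has a component along m' with the sign of \<open>\<epsilon> (f \<bullet> m')\<close>,
  whereas the ray has none.\<close>
lemma shifted_segment_not_on_ray:
  fixes q f h m m' z0 z1 :: "'a::real_inner"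
  assumes "f \<bullet> m = 0" "h \<bullet> m' = 0" "0 < h \<bullet> m \<Longrightarrow> 0 < f \<bullet> m'" "h \<bullet> m < 0 \<Longrightarrow> f \<bullet> m' < 0"
    and "0 < z0 \<bullet> m" "0 < z1 \<bullet> m" "0 < z1 \<bullet> m'"
    and \<epsilon>: "\<epsilon> \<noteq> 0" "f \<bullet> m' = 0 \<or> \<bar>\<epsilon>\<bar> * \<bar>z0 \<bullet> m'\<bar> < \<bar>f \<bullet> m'\<bar>" and "0 \<le> l"
  shows "q + l *\<^sub>R h \<notin> closed_segment (q + f + \<epsilon> *\<^sub>R z0) (q + \<epsilon> *\<^sub>R z1)"
proof
  assume "q + l *\<^sub>R h \<in> closed_segment (q + f + \<epsilon> *\<^sub>R z0) (q + \<epsilon> *\<^sub>R z1)"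
  then obtain t where t: "0 \<le> t" "t \<le> 1"
    and "(1 - t) *\<^sub>R (q + f + \<epsilon> *\<^sub>R z0) + t *\<^sub>R (q + \<epsilon> *\<^sub>R z1) = q + l *\<^sub>R h"
    unfolding in_segment by metis
  then have eq: "(1 - t) *\<^sub>R f + \<epsilon> *\<^sub>R ((1 - t) *\<^sub>R z0 + t *\<^sub>R z1) = l *\<^sub>R h"
    by (simp add: algebra_simps)
  have along_m: "\<epsilon> * ((1 - t) * (z0 \<bullet> m) + t * (z1 \<bullet> m)) = l * (h \<bullet> m)"
    using arg_cong[OF eq, of "\<lambda>x. x \<bullet> m"] assms(1) by (simp add: inner_add_left)
  have along_m': "(1 - t) * (f \<bullet> m') + \<epsilon> * ((1 - t) * (z0 \<bullet> m') + t * (z1 \<bullet> m')) = 0"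
    using arg_cong[OF eq, of "\<lambda>x. x \<bullet> m'"] assms(2) by (simp add: inner_add_left)
  have sq: "0 < \<epsilon> * \<epsilon>"
    using \<epsilon>(1) not_real_square_gt_zero by blast
  have "0 < (1 - t) * (z0 \<bullet> m) + t * (z1 \<bullet> m)"
    using assms(5,6) by (rule convex_combination_pos[OF t])
  moreover have "\<epsilon> * (l * (h \<bullet> m)) = (\<epsilon> * \<epsilon>) * ((1 - t) * (z0 \<bullet> m) + t * (z1 \<bullet> m))"
    by (simp only: along_m[symmetric] mult.assoc)
  ultimately have "0 < l * (\<epsilon> * (h \<bullet> m))"
    using sq by (metis mult_pos_pos mult.left_commute)
  then have "0 < \<epsilon> * (h \<bullet> m)"
    using \<open>0 \<le> l\<close> by (auto simp: zero_less_mult_iff)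
  then consider "0 < \<epsilon>" "0 < h \<bullet> m" | "\<epsilon> < 0" "h \<bullet> m < 0"
    by (auto simp: zero_less_mult_iff)
  then have fm: "0 < \<epsilon> * (f \<bullet> m')"
    by cases (use assms(3,4) in \<open>auto simp: mult_neg_neg\<close>)
  then have "\<bar>\<epsilon>\<bar> * (\<bar>\<epsilon>\<bar> * \<bar>z0 \<bullet> m'\<bar>) < \<bar>\<epsilon> * (f \<bullet> m')\<bar>"
    using \<epsilon> by (auto simp: abs_mult)
  moreover have "- (\<bar>\<epsilon>\<bar> * (\<bar>\<epsilon>\<bar> * \<bar>z0 \<bullet> m'\<bar>)) \<le> \<epsilon> * \<epsilon> * (z0 \<bullet> m')"
    using abs_ge_minus_self[of "\<epsilon> * \<epsilon> * (z0 \<bullet> m')"] by (simp add: abs_mult)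
  ultimately have "0 < \<epsilon> * (f \<bullet> m') + \<epsilon> * \<epsilon> * (z0 \<bullet> m')"
    using fm by linarith
  moreover have "0 < \<epsilon> * \<epsilon> * (z1 \<bullet> m')"
    using sq assms(7) by simp
  ultimately have "0 < (1 - t) * (\<epsilon> * (f \<bullet> m') + \<epsilon> * \<epsilon> * (z0 \<bullet> m')) + t * (\<epsilon> * \<epsilon> * (z1 \<bullet> m'))"
    by (rule convex_combination_pos[OF t])
  moreover have "\<epsilon> * ((1 - t) * (f \<bullet> m') + \<epsilon> * ((1 - t) * (z0 \<bullet> m') + t * (z1 \<bullet> m'))) = 0"
    using along_m' by simp
  ultimately show False
    by (simp add: algebra_simps)
qed

lemma shifted_segment_avoids_ray:
  fixes q f h m m' z0 z1 :: "'a::real_inner"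
  assumes "f \<bullet> m = 0" "h \<bullet> m' = 0" "0 < h \<bullet> m \<Longrightarrow> 0 < f \<bullet> m'" "h \<bullet> m < 0 \<Longrightarrow> f \<bullet> m' < 0"
    and "0 < z0 \<bullet> m" "0 < z1 \<bullet> m" "0 < z1 \<bullet> m'"
  shows "\<forall>\<^sub>F \<epsilon> in at 0. closed_segment (q + f + \<epsilon> *\<^sub>R z0) (q + \<epsilon> *\<^sub>R z1) \<inter> {q + l *\<^sub>R h | l. 0 \<le> l} = {}"
proof -
  have "\<forall>\<^sub>F \<epsilon> in at 0. \<epsilon> \<noteq> 0 \<and> (f \<bullet> m' = 0 \<or> \<bar>\<epsilon>\<bar> * \<bar>z0 \<bullet> m'\<bar> < \<bar>f \<bullet> m'\<bar>)"
  proof (cases "f \<bullet> m' = 0")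
    case False
    then show ?thesis
      using eventually_conj[OF eventually_nonzero_at_0 eventually_abs_mult_less] by simp
  qed (simp add: eventually_nonzero_at_0)
  then show ?thesis
    by (rule eventually_mono) (use shifted_segment_not_on_ray[OF assms] in blast)
qed

lemma eventually_at_right_nested_obtain:
  assumes "\<forall>\<^sub>F x in at_right (0::real). \<forall>\<^sub>F y in at_right (0::real). P x y"
  obtains x y where "P x y"
proof -
  obtain x where "\<forall>\<^sub>F y in at_right (0::real). P x y"
    using eventually_happens'[OF trivial_limit_at_right_real assms] by blast
  then show ?thesis
    using eventually_happens'[OF trivial_limit_at_right_real] that by blast
qed

definition wedge :: "'a::real_inner \<Rightarrow> real \<Rightarrow> 'a \<Rightarrow> 'a \<Rightarrow> 'a set" where
  "wedge q r \<sigma> \<tau> = {x. dist q x < r \<and> 0 < (x - q) \<bullet> \<sigma> \<and> 0 < (x - q) \<bullet> \<tau>}"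

lemma convex_wedge: "convex (wedge q r \<sigma> \<tau>)"
proof -
  have "wedge q r \<sigma> \<tau> = ball q r \<inter> {x. \<sigma> \<bullet> q < \<sigma> \<bullet> x} \<inter> {x. \<tau> \<bullet> q < \<tau> \<bullet> x}"
    by (auto simp: wedge_def inner_diff_left inner_commute[of \<sigma>] inner_commute[of \<tau>])
  then show ?thesis
    by (metis convex_Int convex_ball convex_halfspace_gt)
qed

lemma eventually_approach_in_wedge:
  fixes q d e \<sigma> \<tau> :: "'a::real_inner"
  assumes "0 < r" "\<sigma> \<bullet> d = 0" "\<tau> \<bullet> e = 0" "norm \<sigma> = 1" "norm \<tau> = 1"
    and d: "0 < - (d \<bullet> \<tau>) \<or> d \<bullet> \<tau> = 0 \<and> 0 < \<sigma> \<bullet> \<tau>"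
    and e: "0 < e \<bullet> \<sigma> \<or> e \<bullet> \<sigma> = 0 \<and> 0 < \<sigma> \<bullet> \<tau>"
  shows "\<forall>\<^sub>F l in at_right 0. \<forall>\<^sub>F \<eta> in at_right 0.
    q - l *\<^sub>R d + \<eta> *\<^sub>R \<sigma> \<in> wedge q r \<sigma> \<tau> \<and> q + l *\<^sub>R e + \<eta> *\<^sub>R \<tau> \<in> wedge q r \<sigma> \<tau>"
proof -
  have \<sigma>\<sigma>: "\<sigma> \<bullet> \<sigma> = 1" and \<tau>\<tau>: "\<tau> \<bullet> \<tau> = 1"
    using assms(4,5) by (simp_all add: dot_square_norm)
  have "\<forall>\<^sub>F l in at_right 0. 0 < l \<and> \<bar>l\<bar> * (norm d + norm e) < r / 2"
    using eventually_abs_mult_less[of "r / 2"] assms(1)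
    by (simp add: eventually_at_split eventually_conj eventually_at_right_less)
  then show ?thesis
  proof (rule eventually_mono)
    fix l :: real assume l: "0 < l \<and> \<bar>l\<bar> * (norm d + norm e) < r / 2"
    have "\<forall>\<^sub>F \<eta> in at_right 0. (0 < \<eta> \<and> \<eta> < r / 2) \<and>
        0 < l * - (d \<bullet> \<tau>) + \<eta> * (\<sigma> \<bullet> \<tau>) \<and> 0 < l * (e \<bullet> \<sigma>) + \<eta> * (\<sigma> \<bullet> \<tau>)"
      using l assms(1) d e
      by (intro eventually_conj eventually_affine_pos eventually_at_right_less
          order_tendstoD(2)[OF tendsto_ident_at]) auto
    then show "\<forall>\<^sub>F \<eta> in at_right 0.
        q - l *\<^sub>R d + \<eta> *\<^sub>R \<sigma> \<in> wedge q r \<sigma> \<tau> \<and> q + l *\<^sub>R e + \<eta> *\<^sub>R \<tau> \<in> wedge q r \<sigma> \<tau>"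
    proof (rule eventually_mono)
      fix \<eta> :: real
      assume \<eta>: "(0 < \<eta> \<and> \<eta> < r / 2) \<and>
        0 < l * - (d \<bullet> \<tau>) + \<eta> * (\<sigma> \<bullet> \<tau>) \<and> 0 < l * (e \<bullet> \<sigma>) + \<eta> * (\<sigma> \<bullet> \<tau>)"
      have "norm (\<eta> *\<^sub>R \<sigma> - l *\<^sub>R d) \<le> \<eta> + l * norm d"
        using norm_triangle_ineq4[of "\<eta> *\<^sub>R \<sigma>" "l *\<^sub>R d"] l \<eta> assms(4) by simp
      moreover have "norm (l *\<^sub>R e + \<eta> *\<^sub>R \<tau>) \<le> l * norm e + \<eta>"
        using norm_triangle_ineq[of "l *\<^sub>R e" "\<eta> *\<^sub>R \<tau>"] l \<eta> assms(5) by simp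
      moreover have "l * norm d \<le> \<bar>l\<bar> * (norm d + norm e)" "l * norm e \<le> \<bar>l\<bar> * (norm d + norm e)"
        using l by (simp_all add: distrib_left)
      ultimately have "norm (\<eta> *\<^sub>R \<sigma> - l *\<^sub>R d) < r" "norm (l *\<^sub>R e + \<eta> *\<^sub>R \<tau>) < r"
        using l \<eta> by linarith+
      then show "q - l *\<^sub>R d + \<eta> *\<^sub>R \<sigma> \<in> wedge q r \<sigma> \<tau> \<and> q + l *\<^sub>R e + \<eta> *\<^sub>R \<tau> \<in> wedge q r \<sigma> \<tau>"
        using l \<eta> assms(2,3) \<sigma>\<sigma> \<tau>\<tau>
        by (simp add: wedge_def dist_norm norm_minus_commute[of q] inner_diff_left inner_add_left
            inner_commute[of d] inner_commute[of e] inner_commute[of \<tau> \<sigma>] algebra_simps)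
    qed
  qed
qed

section \<open>Simple polygons with coherent normals\<close>

locale polygon_with_normals =
  fixes n :: nat and p u :: "nat \<Rightarrow> real^2"
  assumes simple: "simple_closed_polygon n p"
    and u_periodic: "\<forall>i. u (i + n) = u i"
    and u_normal: "\<forall>i\<in>{1..n}. norm (u i) = 1 \<and> u i \<bullet> (p i - p (i - 1)) = 0 \<and>
        (\<forall>b\<in>rel_interior (polygon_edge p i). \<forall>\<^sub>F \<epsilon> in at_right 0.
            b + \<epsilon> *\<^sub>R u i \<in> outside (polygon n p) \<and> b - \<epsilon> *\<^sub>R u i \<in> inside (polygon n p))"
begin

text \<open>Indices are used for all \<open>k \<ge> 1\<close> and reduced modulo n; \<open>k = 0\<close> is avoided because
  \<open>p (k - 1)\<close> truncates there.\<close>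

abbreviation edge where "edge \<equiv> polygon_edge p"
abbreviation P where "P \<equiv> polygon n p"

lemma n_ge_3: "3 \<le> n"
  using simple by (simp add: simple_closed_polygon_def)

lemma p_mod: "p (m mod n) = p m"
  using simple by (intro periodic_mod) (simp add: simple_closed_polygon_def)

lemma p_eq_iff: "p a = p b \<longleftrightarrow> a mod n = b mod n"
proof
  assume "p a = p b"
  moreover have "a mod n \<in> {0..<n}" "b mod n \<in> {0..<n}"
    using n_ge_3 by auto
  ultimately show "a mod n = b mod n"
    using simple unfolding simple_closed_polygon_def inj_on_def by (metis p_mod)
qed (metis p_mod)

lemma u_cong: "j mod n = k mod n \<Longrightarrow> u j = u k"
  by (metis periodic_mod[OF u_periodic])

lemma edge_cong:
  assumes "1 \<le> j" "1 \<le> k" "j mod n = k mod n"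
  shows "edge j = edge k"
  using mod_diff1_cong[OF assms] assms(3) by (simp add: polygon_edge_def p_eq_iff[symmetric])

lemma index_representative:
  assumes "1 \<le> k"
  obtains i where "i \<in> {1..n}" "i mod n = k mod n"
proof
  show "(k - 1) mod n + 1 \<in> {1..n}"
    using n_ge_3 by (simp add: Suc_leI)
  show "((k - 1) mod n + 1) mod n = k mod n"
    using assms by (simp add: mod_Suc_eq)
qed

lemma u_normal_at:
  assumes "1 \<le> k"
  shows "norm (u k) = 1 \<and> u k \<bullet> (p k - p (k - 1)) = 0 \<and>
    (\<forall>b\<in>rel_interior (edge k). \<forall>\<^sub>F \<epsilon> in at_right 0. b + \<epsilon> *\<^sub>R u k \<in> outside P \<and> b - \<epsilon> *\<^sub>R u k \<in> inside P)"
proof -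
  obtain i where i: "i \<in> {1..n}" "i mod n = k mod n"
    using index_representative[OF assms] .
  have "u i = u k" "edge i = edge k" "p i = p k" "p (i - 1) = p (k - 1)"
    using u_cong[OF i(2)] edge_cong[OF _ assms i(2)] i mod_diff1_cong[OF _ assms i(2)]
    by (simp_all add: p_eq_iff)
  moreover have "norm (u i) = 1 \<and> u i \<bullet> (p i - p (i - 1)) = 0 \<and>
    (\<forall>b\<in>rel_interior (edge i). \<forall>\<^sub>F \<epsilon> in at_right 0. b + \<epsilon> *\<^sub>R u i \<in> outside P \<and> b - \<epsilon> *\<^sub>R u i \<in> inside P)"
    using u_normal i(1) by blast
  ultimately show ?thesis
    by simp
qed

lemma norm_u: "1 \<le> k \<Longrightarrow> norm (u k) = 1"
  using u_normal_at by blast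

lemma u_orthogonal: "1 \<le> k \<Longrightarrow> u k \<bullet> (p k - p (k - 1)) = 0"
  using u_normal_at by blast

lemma eventually_sides:
  "1 \<le> k \<Longrightarrow> b \<in> rel_interior (edge k) \<Longrightarrow>
    \<forall>\<^sub>F \<epsilon> in at_right 0. b + \<epsilon> *\<^sub>R u k \<in> outside P \<and> b - \<epsilon> *\<^sub>R u k \<in> inside P"
  using u_normal_at by blast

lemma edges_inter:
  assumes "1 \<le> j" "1 \<le> k" "j mod n \<noteq> k mod n"
  shows "edge j \<inter> edge k \<subseteq> {p (j - 1), p j} \<inter> {p (k - 1), p k}"
proof -
  obtain i where i: "i \<in> {1..n}" "i mod n = j mod n"
    using index_representative[OF assms(1)] .
  obtain i' where i': "i' \<in> {1..n}" "i' mod n = k mod n"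
    using index_representative[OF assms(2)] .
  have "i \<noteq> i'"
    using i(2) i'(2) assms(3) by auto
  moreover have "\<forall>i\<in>{1..n}. \<forall>j\<in>{1..n}. i \<noteq> j \<longrightarrow>
      edge i \<inter> edge j \<subseteq> {p (i - 1), p i} \<inter> {p (j - 1), p j}"
    using simple by (simp add: simple_closed_polygon_def)
  ultimately have "edge i \<inter> edge i' \<subseteq> {p (i - 1), p i} \<inter> {p (i' - 1), p i'}"
    using i(1) i'(1) by blast
  moreover have "edge i = edge j" "edge i' = edge k" "p i = p j" "p i' = p k"
    "p (i - 1) = p (j - 1)" "p (i' - 1) = p (k - 1)"
    using assms i i' edge_cong[of i j] edge_cong[of i' k] mod_diff1_cong[of i j] mod_diff1_cong[of i' k]
    by (simp_all add: p_eq_iff)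
  ultimately show ?thesis
    by simp
qed

lemma vertex_pred_neq: "1 \<le> k \<Longrightarrow> p (k - 1) \<noteq> p k"
  using n_ge_3 by (cases k) (auto simp: p_eq_iff mod_Suc)

lemma vertex_notin_edge:
  assumes "1 \<le> j" "j mod n \<noteq> k mod n" "j mod n \<noteq> Suc k mod n"
  shows "p k \<notin> edge j"
proof
  assume "p k \<in> edge j"
  moreover have "p k \<in> edge (Suc k)"
    by (simp add: polygon_edge_def)
  ultimately have "k mod n = (j - 1) mod n \<or> k mod n = j mod n"
    using edges_inter[OF assms(1) _ assms(3)] by (auto simp: p_eq_iff)
  moreover have "Suc (j - 1) = j"
    using assms(1) by simp
  ultimately show False
    using assms(2,3) mod_Suc_eq by metis
qed

lemma rel_interior_edge: "1 \<le> k \<Longrightarrow> rel_interior (edge k) = open_segment (p (k - 1)) (p k)"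
  using vertex_pred_neq by (simp add: polygon_edge_def rel_interior_closed_segment)

lemma edge_subset_line:
  assumes "1 \<le> k"
  shows "edge k \<subseteq> {y. (y - p k) \<bullet> u k = 0}"
proof -
  have "{y. (y - p k) \<bullet> u k = 0} = {y. u k \<bullet> y = u k \<bullet> p k}"
    by (auto simp: inner_diff_right inner_commute[of _ "u k"])
  moreover have "p (k - 1) \<in> {y. u k \<bullet> y = u k \<bullet> p k}"
    using u_orthogonal[OF assms] by (simp add: inner_diff_right)
  ultimately show ?thesis
    unfolding polygon_edge_def by (simp add: closed_segment_subset convex_hyperplane)
qed

lemma edge_subset_ray_back: "edge k \<subseteq> {p k + l *\<^sub>R (p (k - 1) - p k) | l. 0 \<le> l}"
  unfolding polygon_edge_def closed_segment_commute[of "p (k - 1)"] by (rule closed_segment_subset_ray)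

lemma edge_subset_ray_forward: "edge (Suc k) \<subseteq> {p k + l *\<^sub>R (p (Suc k) - p k) | l. 0 \<le> l}"
  unfolding polygon_edge_def by (simp add: closed_segment_subset_ray)

lemma near_compact_only_edges:
  assumes "compact K" "\<forall>i\<in>J. 1 \<le> i"
    and "\<And>j. 1 \<le> j \<Longrightarrow> j mod n \<notin> (\<lambda>i. i mod n) ` J \<Longrightarrow> K \<inter> edge j = {}"
  shows "\<exists>\<delta>>0. \<forall>y\<in>K. \<forall>x\<in>P. dist y x < \<delta> \<longrightarrow> (\<exists>i\<in>J. x \<in> edge i)"
proof -
  define Far where "Far = \<Union> (edge ` {j\<in>{1..n}. j mod n \<notin> (\<lambda>i. i mod n) ` J})"
  have "closed Far"
    unfolding Far_def polygon_edge_def by (intro closed_Union) auto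
  moreover have "K \<inter> Far = {}"
    unfolding Far_def using assms(3) by auto
  ultimately obtain \<delta> where \<delta>: "0 < \<delta>" "\<forall>y\<in>K. \<forall>x\<in>Far. \<delta> \<le> dist y x"
    using separate_compact_closed[OF assms(1)] by blast
  have "\<exists>i\<in>J. x \<in> edge i" if "y \<in> K" "x \<in> P" "dist y x < \<delta>" for x y
  proof -
    obtain j where j: "j \<in> {1..n}" "x \<in> edge j"
      using \<open>x \<in> P\<close> unfolding polygon_def by blast
    then have "j mod n \<in> (\<lambda>i. i mod n) ` J"
      using \<delta>(2) that unfolding Far_def by force
    then obtain i where "i \<in> J" "j mod n = i mod n"
      by blast
    then show ?thesis
      using j assms(2) edge_cong[of j i] by auto
  qed
  then show ?thesis
    using \<delta>(1) by blast
qed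

lemma eventually_shifted_segment_disjoint:
  assumes "finite J" "\<forall>i\<in>J. 1 \<le> i"
    and "\<And>j. 1 \<le> j \<Longrightarrow> j mod n \<notin> (\<lambda>i. i mod n) ` J \<Longrightarrow> closed_segment x0 x1 \<inter> edge j = {}"
    and "\<And>i. i \<in> J \<Longrightarrow>
      \<forall>\<^sub>F \<epsilon> in at 0. closed_segment (x0 + \<epsilon> *\<^sub>R z0) (x1 + \<epsilon> *\<^sub>R z1) \<inter> edge i = {}"
  shows "\<forall>\<^sub>F \<epsilon> in at 0. closed_segment (x0 + \<epsilon> *\<^sub>R z0) (x1 + \<epsilon> *\<^sub>R z1) \<inter> P = {}"
proof -
  obtain \<delta> where \<delta>: "0 < \<delta>"
    "\<forall>y\<in>closed_segment x0 x1. \<forall>x\<in>P. dist y x < \<delta> \<longrightarrow> (\<exists>i\<in>J. x \<in> edge i)"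
    using near_compact_only_edges[OF compact_segment assms(2,3)] by blast
  have "\<forall>\<^sub>F \<epsilon> in at 0. \<forall>i\<in>J. closed_segment (x0 + \<epsilon> *\<^sub>R z0) (x1 + \<epsilon> *\<^sub>R z1) \<inter> edge i = {}"
    using assms(1,4) by (simp add: eventually_ball_finite)
  with eventually_abs_mult_less[OF \<delta>(1)]
  have "\<forall>\<^sub>F \<epsilon> in at 0. \<bar>\<epsilon>\<bar> * (norm z0 + norm z1) < \<delta> \<and>
      (\<forall>i\<in>J. closed_segment (x0 + \<epsilon> *\<^sub>R z0) (x1 + \<epsilon> *\<^sub>R z1) \<inter> edge i = {})"
    by (rule eventually_conj)
  then show ?thesis
  proof (rule eventually_mono)
    fix \<epsilon> :: real
    assume \<epsilon>: "\<bar>\<epsilon>\<bar> * (norm z0 + norm z1) < \<delta> \<and>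
      (\<forall>i\<in>J. closed_segment (x0 + \<epsilon> *\<^sub>R z0) (x1 + \<epsilon> *\<^sub>R z1) \<inter> edge i = {})"
    show "closed_segment (x0 + \<epsilon> *\<^sub>R z0) (x1 + \<epsilon> *\<^sub>R z1) \<inter> P = {}"
    proof (rule ccontr)
      assume "\<not> ?thesis"
      then obtain x where x: "x \<in> closed_segment (x0 + \<epsilon> *\<^sub>R z0) (x1 + \<epsilon> *\<^sub>R z1)" "x \<in> P"
        by blast
      obtain y where "y \<in> closed_segment x0 x1" "dist y x \<le> \<bar>\<epsilon>\<bar> * (norm z0 + norm z1)"
        using shifted_closed_segment_near[OF x(1)] by blast
      moreover from this(2) have "dist y x < \<delta>"
        using \<epsilon> by linarith
      ultimately obtain i where "i \<in> J" "x \<in> edge i"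
        using \<delta>(2) x(2) by blast
      then show False
        using \<epsilon> x(1) by blast
    qed
  qed
qed

lemma vertex_wedge_disjoint:
  assumes k: "1 \<le> k" and "\<sigma> \<bullet> (p k - p (k - 1)) = 0" "\<tau> \<bullet> (p (Suc k) - p k) = 0"
  obtains r where "0 < r" "wedge (p k) r \<sigma> \<tau> \<inter> P = {}"
proof -
  have "\<exists>r>0. \<forall>y\<in>{p k}. \<forall>x\<in>P. dist y x < r \<longrightarrow> (\<exists>i\<in>{k, Suc k}. x \<in> edge i)"
  proof (rule near_compact_only_edges)
    show "{p k} \<inter> edge j = {}" if "1 \<le> j" "j mod n \<notin> (\<lambda>i. i mod n) ` {k, Suc k}" for j
      using vertex_notin_edge[of j k] that by auto
  qed (use k in auto)
  then obtain r where r: "0 < r" "\<forall>x\<in>P. dist (p k) x < r \<longrightarrow> x \<in> edge k \<or> x \<in> edge (Suc k)"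
    by auto
  note edge_subset_ray_back[of k]
  then have \<sigma>: "(y - p k) \<bullet> \<sigma> = 0" if y: "y \<in> edge k" for y
  proof -
    obtain l where "y - p k = - (l *\<^sub>R (p k - p (k - 1)))"
      using y \<open>edge k \<subseteq> _\<close> by (force simp: algebra_simps)
    then show ?thesis
      using assms(2) by (simp add: inner_commute)
  qed
  note edge_subset_ray_forward[of k]
  then have \<tau>: "(y - p k) \<bullet> \<tau> = 0" if y: "y \<in> edge (Suc k)" for y
  proof -
    obtain l where "y - p k = l *\<^sub>R (p (Suc k) - p k)"
      using y \<open>edge (Suc k) \<subseteq> _\<close> by force
    then show ?thesis
      using assms(3) by (simp add: inner_commute)
  qed
  have "wedge (p k) r \<sigma> \<tau> \<inter> P = {}"
  proof (intro equals0I)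
    fix x assume "x \<in> wedge (p k) r \<sigma> \<tau> \<inter> P"
    then show False
      using r(2) \<sigma>[of x] \<tau>[of x] by (auto simp: wedge_def)
  qed
  then show ?thesis
    using that r(1) by blast
qed

lemma eventually_sides_near_vertex:
  assumes k: "1 \<le> k"
  shows "\<forall>\<^sub>F l in at_right 0. \<forall>\<^sub>F \<eta> in at_right 0.
    p k - l *\<^sub>R (p k - p (k - 1)) + \<eta> *\<^sub>R u k \<in> outside P \<and>
    p k - l *\<^sub>R (p k - p (k - 1)) - \<eta> *\<^sub>R u k \<in> inside P \<and>
    p k + l *\<^sub>R (p (Suc k) - p k) + \<eta> *\<^sub>R u (Suc k) \<in> outside P \<and>
    p k + l *\<^sub>R (p (Suc k) - p k) - \<eta> *\<^sub>R u (Suc k) \<in> inside P"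
  using eventually_at_right_real[OF zero_less_one]
proof (rule eventually_mono)
  fix l :: real assume "l \<in> {0<..<1}"
  then have l: "0 < l" "l < 1" by auto
  have "p k - l *\<^sub>R (p k - p (k - 1)) \<in> rel_interior (edge k)"
    using k l vertex_pred_neq[OF k]
    by (simp add: rel_interior_edge in_segment) (intro exI[of _ "1 - l"], simp add: algebra_simps)
  moreover have "p k + l *\<^sub>R (p (Suc k) - p k) \<in> rel_interior (edge (Suc k))"
    using l vertex_pred_neq[of "Suc k"]
    by (simp add: rel_interior_edge in_segment) (intro exI[of _ l], simp add: algebra_simps)
  ultimately show "\<forall>\<^sub>F \<eta> in at_right 0.
    p k - l *\<^sub>R (p k - p (k - 1)) + \<eta> *\<^sub>R u k \<in> outside P \<and>
    p k - l *\<^sub>R (p k - p (k - 1)) - \<eta> *\<^sub>R u k \<in> inside P \<and>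
    p k + l *\<^sub>R (p (Suc k) - p k) + \<eta> *\<^sub>R u (Suc k) \<in> outside P \<and>
    p k + l *\<^sub>R (p (Suc k) - p k) - \<eta> *\<^sub>R u (Suc k) \<in> inside P"
    using eventually_conj[OF eventually_sides[OF k] eventually_sides[of "Suc k"]] by simp
qed

text \<open>Near the vertex, an open wedge bounded by the lines of the two incident edges misses P, so it
  lies in one component of its complement. Points pushed off the two edges along \<open>\<sigma>\<close> and \<open>\<tau>\<close> lie in
  this wedge, so they cannot be on opposite sides of P.\<close>
lemma vertex_normals_not_opposite:
  assumes k: "1 \<le> k"
  defines "d \<equiv> p k - p (k - 1)" and "e \<equiv> p (Suc k) - p k"
  assumes \<sigma>\<tau>: "\<sigma> = u k \<and> \<tau> = - u (Suc k) \<or> \<sigma> = - u k \<and> \<tau> = u (Suc k)"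
    and "0 < - (d \<bullet> \<tau>) \<or> d \<bullet> \<tau> = 0 \<and> 0 < \<sigma> \<bullet> \<tau>" "0 < e \<bullet> \<sigma> \<or> e \<bullet> \<sigma> = 0 \<and> 0 < \<sigma> \<bullet> \<tau>"
  shows False
proof -
  have \<sigma>: "\<sigma> \<bullet> d = 0" "norm \<sigma> = 1" and \<tau>: "\<tau> \<bullet> e = 0" "norm \<tau> = 1"
    using \<sigma>\<tau> k norm_u[of k] norm_u[of "Suc k"] u_orthogonal[of k] u_orthogonal[of "Suc k"]
    by (auto simp: d_def e_def)
  obtain r where r: "0 < r" "wedge (p k) r \<sigma> \<tau> \<inter> P = {}"
    using vertex_wedge_disjoint[OF k, of \<sigma> \<tau>] \<sigma>(1) \<tau>(1) by (auto simp: d_def e_def)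
  have "\<forall>\<^sub>F l in at_right 0. \<forall>\<^sub>F \<eta> in at_right 0.
      p k - l *\<^sub>R d + \<eta> *\<^sub>R \<sigma> \<in> wedge (p k) r \<sigma> \<tau> \<and> p k + l *\<^sub>R e + \<eta> *\<^sub>R \<tau> \<in> wedge (p k) r \<sigma> \<tau>"
    using eventually_approach_in_wedge[OF r(1) \<sigma>(1) \<tau>(1) \<sigma>(2) \<tau>(2) assms(5,6)] .
  moreover have "\<forall>\<^sub>F l in at_right 0. \<forall>\<^sub>F \<eta> in at_right 0.
      p k - l *\<^sub>R d + \<eta> *\<^sub>R \<sigma> \<in> outside P \<and> p k + l *\<^sub>R e + \<eta> *\<^sub>R \<tau> \<in> inside P \<or>
      p k - l *\<^sub>R d + \<eta> *\<^sub>R \<sigma> \<in> inside P \<and> p k + l *\<^sub>R e + \<eta> *\<^sub>R \<tau> \<in> outside P"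
    using eventually_sides_near_vertex[OF k] \<sigma>\<tau> unfolding d_def e_def
    by (elim disjE) (auto elim!: eventually_mono)
  ultimately have "\<forall>\<^sub>F l in at_right 0. \<forall>\<^sub>F \<eta> in at_right 0.
      (p k - l *\<^sub>R d + \<eta> *\<^sub>R \<sigma> \<in> wedge (p k) r \<sigma> \<tau> \<and> p k + l *\<^sub>R e + \<eta> *\<^sub>R \<tau> \<in> wedge (p k) r \<sigma> \<tau>) \<and>
      (p k - l *\<^sub>R d + \<eta> *\<^sub>R \<sigma> \<in> outside P \<and> p k + l *\<^sub>R e + \<eta> *\<^sub>R \<tau> \<in> inside P \<or>
       p k - l *\<^sub>R d + \<eta> *\<^sub>R \<sigma> \<in> inside P \<and> p k + l *\<^sub>R e + \<eta> *\<^sub>R \<tau> \<in> outside P)"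
    by (simp add: eventually_conj_iff)
  then obtain l \<eta> where
    "(p k - l *\<^sub>R d + \<eta> *\<^sub>R \<sigma> \<in> wedge (p k) r \<sigma> \<tau> \<and> p k + l *\<^sub>R e + \<eta> *\<^sub>R \<tau> \<in> wedge (p k) r \<sigma> \<tau>) \<and>
      (p k - l *\<^sub>R d + \<eta> *\<^sub>R \<sigma> \<in> outside P \<and> p k + l *\<^sub>R e + \<eta> *\<^sub>R \<tau> \<in> inside P \<or>
       p k - l *\<^sub>R d + \<eta> *\<^sub>R \<sigma> \<in> inside P \<and> p k + l *\<^sub>R e + \<eta> *\<^sub>R \<tau> \<in> outside P)"
    by (rule eventually_at_right_nested_obtain)
  moreover have "connected (wedge (p k) r \<sigma> \<tau>)"
    by (simp add: convex_connected convex_wedge)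
  ultimately show False
    using connected_subset_outside[OF _ r(2)] inside_Int_outside by blast
qed

lemma normals_consistent:
  assumes k: "1 \<le> k"
  defines "d \<equiv> p k - p (k - 1)" and "e \<equiv> p (Suc k) - p k"
  shows "0 < e \<bullet> u k \<Longrightarrow> d \<bullet> u (Suc k) < 0"
    and "e \<bullet> u k < 0 \<Longrightarrow> 0 < d \<bullet> u (Suc k)"
    and "e \<bullet> u k = 0 \<longleftrightarrow> d \<bullet> u (Suc k) = 0"
    and "- 1 < u k \<bullet> u (Suc k)"
proof -
  define a c where "a = u k" and "c = u (Suc k)"
  have a: "norm a = 1" "a \<bullet> d = 0" and c: "norm c = 1" "c \<bullet> e = 0"
    using k norm_u u_orthogonal[of k] u_orthogonal[of "Suc k"]
    by (simp_all add: a_def c_def d_def e_def)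
  note not_opposite = vertex_normals_not_opposite[OF k, folded d_def e_def a_def c_def]
  have "a \<noteq> 0" "c \<noteq> 0" "d \<noteq> 0" "e \<noteq> 0"
    using a c k vertex_pred_neq[of k] vertex_pred_neq[of "Suc k"] by (auto simp: d_def e_def)
  then have perp: "e \<bullet> a = 0 \<longleftrightarrow> d \<bullet> c = 0"
    using orthogonal_transfer_2[of a e d c] orthogonal_transfer_2[of c d e a] a c
    by (auto simp: inner_commute)
  then show "e \<bullet> u k = 0 \<longleftrightarrow> d \<bullet> u (Suc k) = 0"
    by (simp add: a_def c_def)
  show "0 < e \<bullet> u k \<Longrightarrow> d \<bullet> u (Suc k) < 0"
    using not_opposite[of a "- c"] perp by (force simp: a_def c_def)
  show "e \<bullet> u k < 0 \<Longrightarrow> 0 < d \<bullet> u (Suc k)"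
    using not_opposite[of "- a" c] perp by (force simp: a_def c_def)
  show "- 1 < u k \<bullet> u (Suc k)"
  proof (rule ccontr)
    assume "\<not> - 1 < u k \<bullet> u (Suc k)"
    then have "a \<bullet> c = - 1"
      using Cauchy_Schwarz_ineq2[of a c] a c by (auto simp: a_def c_def)
    have "(a + c) \<bullet> (a + c) = a \<bullet> a + 2 * (a \<bullet> c) + c \<bullet> c"
      by (simp add: inner_add_left inner_add_right inner_commute[of c a])
    also have "\<dots> = 0"
      using \<open>a \<bullet> c = - 1\<close> a(1) c(1) by (simp add: dot_square_norm)
    finally have "c = - a"
      by (simp add: add_eq_0_iff2)
    then show False
      using not_opposite[of a a] a c by (simp add: inner_commute dot_square_norm)
  qed
qed

lemma bisector_inner_pos:
  assumes "1 \<le> k"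
  shows "0 < (u k + u (Suc k)) \<bullet> u k" "0 < (u k + u (Suc k)) \<bullet> u (Suc k)"
  using normals_consistent(4)[OF assms] norm_u[OF assms] norm_u[of "Suc k"]
  by (simp_all add: inner_add_left inner_commute[of "u (Suc k)"] dot_square_norm)

lemma eventually_segment_to_vertex_avoids_next_edge:
  assumes k: "1 \<le> k" and b: "b \<in> rel_interior (edge k)" and v: "0 < v \<bullet> u k"
  shows "\<forall>\<^sub>F \<epsilon> in at 0.
    closed_segment (b + \<epsilon> *\<^sub>R v) (p k + \<epsilon> *\<^sub>R (u k + u (Suc k))) \<inter> edge (Suc k) = {}"
proof -
  obtain t where "0 < t" "t < 1" "b = (1 - t) *\<^sub>R p (k - 1) + t *\<^sub>R p k"
    using b unfolding rel_interior_edge[OF k] in_segment(2) by blast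
  then have t: "0 < 1 - t" "b - p k = - ((1 - t) *\<^sub>R (p k - p (k - 1)))"
    by (simp_all add: algebra_simps)
  have "\<forall>\<^sub>F \<epsilon> in at 0. closed_segment (p k + (b - p k) + \<epsilon> *\<^sub>R v) (p k + \<epsilon> *\<^sub>R (u k + u (Suc k))) \<inter>
      {p k + l *\<^sub>R (p (Suc k) - p k) | l. 0 \<le> l} = {}"
  proof (rule shifted_segment_avoids_ray)
    show "(b - p k) \<bullet> u k = 0"
      using u_orthogonal[OF k] t(2) by (simp add: inner_commute)
    show "(p (Suc k) - p k) \<bullet> u (Suc k) = 0"
      using u_orthogonal[of "Suc k"] by (simp add: inner_commute)
    show "0 < (b - p k) \<bullet> u (Suc k)" if "0 < (p (Suc k) - p k) \<bullet> u k"
      using normals_consistent(1)[OF k] that t by (simp add: inner_commute mult_pos_neg)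
    show "(b - p k) \<bullet> u (Suc k) < 0" if "(p (Suc k) - p k) \<bullet> u k < 0"
      using normals_consistent(2)[OF k] that t by (simp add: inner_commute)
  qed (use v bisector_inner_pos[OF k] in auto)
  then show ?thesis
    using edge_subset_ray_forward[of k] by (auto elim!: eventually_mono)
qed

lemma eventually_segment_to_vertex_disjoint:
  assumes k: "1 \<le> k" and b: "b \<in> rel_interior (edge k)" and v: "0 < v \<bullet> u k"
  shows "\<forall>\<^sub>F \<epsilon> in at 0. closed_segment (b + \<epsilon> *\<^sub>R v) (p k + \<epsilon> *\<^sub>R (u k + u (Suc k))) \<inter> P = {}"
proof (rule eventually_shifted_segment_disjoint[of "{k, Suc k}"])
  have bk: "b \<in> edge k"
    using b rel_interior_subset by blast
  show "closed_segment b (p k) \<inter> edge j = {}"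
    if j: "1 \<le> j" "j mod n \<notin> (\<lambda>i. i mod n) ` {k, Suc k}" for j
  proof -
    have "closed_segment b (p k) \<subseteq> edge k"
      using bk by (simp add: polygon_edge_def closed_segment_subset)
    then have "closed_segment b (p k) \<inter> edge j \<subseteq> {p (k - 1), p k}"
      using edges_inter[OF k j(1)] j(2) by auto
    moreover have "p (k - 1) \<notin> closed_segment b (p k)"
      using dist_in_open_segment[of b "p (k - 1)" "p k"] dist_in_closed_segment[of "p (k - 1)" b "p k"] b
      by (auto simp: rel_interior_edge[OF k])
    moreover have "p k \<notin> edge j"
      using vertex_notin_edge j by auto
    ultimately show ?thesis
      by blast
  qed
  have "\<forall>\<^sub>F \<epsilon> in at 0. closed_segment (b + \<epsilon> *\<^sub>R v) (p k + \<epsilon> *\<^sub>R (u k + u (Suc k))) \<inter>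
      {y. (y - p k) \<bullet> u k = 0} = {}"
    using bk edge_subset_line[OF k] v bisector_inner_pos[OF k]
    by (intro shifted_segment_off_line) auto
  then have "\<forall>\<^sub>F \<epsilon> in at 0. closed_segment (b + \<epsilon> *\<^sub>R v) (p k + \<epsilon> *\<^sub>R (u k + u (Suc k))) \<inter> edge k = {}"
    using edge_subset_line[OF k] by (auto elim!: eventually_mono)
  then show "\<forall>\<^sub>F \<epsilon> in at 0. closed_segment (b + \<epsilon> *\<^sub>R v) (p k + \<epsilon> *\<^sub>R (u k + u (Suc k))) \<inter> edge i = {}"
    if "i \<in> {k, Suc k}" for i
    using that eventually_segment_to_vertex_avoids_next_edge[OF assms] by auto
qed (use k in auto)

lemma eventually_normal_segment_disjoint:
  assumes k: "1 \<le> k" and b: "b \<in> rel_interior (edge k)" and v: "0 < v \<bullet> u k"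
  shows "\<forall>\<^sub>F \<epsilon> in at 0. closed_segment (b + \<epsilon> *\<^sub>R u k) (b + \<epsilon> *\<^sub>R v) \<inter> P = {}"
proof (rule eventually_shifted_segment_disjoint[of "{k}"])
  have bk: "b \<in> edge k"
    using b rel_interior_subset by blast
  show "closed_segment b b \<inter> edge j = {}"
    if j: "1 \<le> j" "j mod n \<notin> (\<lambda>i. i mod n) ` {k}" for j
  proof -
    have "b \<notin> {p (k - 1), p k}"
      using b by (auto simp: rel_interior_edge[OF k] open_segment_def)
    then show ?thesis
      using edges_inter[OF k j(1)] j(2) bk by auto
  qed
  have "\<forall>\<^sub>F \<epsilon> in at 0. closed_segment (b + \<epsilon> *\<^sub>R u k) (b + \<epsilon> *\<^sub>R v) \<inter> {y. (y - p k) \<bullet> u k = 0} = {}"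
    using bk edge_subset_line[OF k] v norm_u[OF k]
    by (intro shifted_segment_off_line) (auto simp: dot_square_norm)
  then show "\<forall>\<^sub>F \<epsilon> in at 0. closed_segment (b + \<epsilon> *\<^sub>R u k) (b + \<epsilon> *\<^sub>R v) \<inter> edge i = {}"
    if "i \<in> {k}" for i
    using that edge_subset_line[OF k] by (auto elim!: eventually_mono)
qed (use k in auto)

text \<open>The broken line \<open>b + \<epsilon> u\<^sub>k \<rightarrow> b + \<epsilon> v \<rightarrow> p\<^sub>k + \<epsilon> (u\<^sub>k + u\<^sub>k\<^sub>+\<^sub>1)\<close> misses P and starts on
  the correct side of it.\<close>
lemma eventually_segment_to_vertex_sides:
  assumes k: "1 \<le> k" and b: "b \<in> rel_interior (edge k)" and v: "0 < v \<bullet> u k"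
  shows "\<forall>\<^sub>F \<epsilon> in at_right 0.
    closed_segment (b + \<epsilon> *\<^sub>R v) (p k + \<epsilon> *\<^sub>R (u k + u (Suc k))) \<subseteq> outside P \<and>
    closed_segment (b + (- \<epsilon>) *\<^sub>R v) (p k + (- \<epsilon>) *\<^sub>R (u k + u (Suc k))) \<subseteq> inside P"
proof -
  define S where "S \<epsilon> = closed_segment (b + \<epsilon> *\<^sub>R u k) (b + \<epsilon> *\<^sub>R v) \<union>
    closed_segment (b + \<epsilon> *\<^sub>R v) (p k + \<epsilon> *\<^sub>R (u k + u (Suc k)))" for \<epsilon>
  have "\<forall>\<^sub>F \<epsilon> in at 0. S \<epsilon> \<inter> P = {}"
    using eventually_conj[OF eventually_normal_segment_disjoint[OF assms]
        eventually_segment_to_vertex_disjoint[OF assms]]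
    by (simp add: S_def Int_Un_distrib2)
  then have "\<forall>\<^sub>F \<epsilon> in at_right 0. S \<epsilon> \<inter> P = {} \<and> S (- \<epsilon>) \<inter> P = {}"
    by (rule eventually_at_0_both_sides)
  moreover note eventually_sides[OF k b]
  ultimately show ?thesis
  proof eventually_elim
    case (elim \<epsilon>)
    have "connected (S \<delta>)" for \<delta>
      unfolding S_def by (rule connected_Un) auto
    moreover have "b + \<epsilon> *\<^sub>R u k \<in> S \<epsilon>" "b - \<epsilon> *\<^sub>R u k \<in> S (- \<epsilon>)"
      by (simp_all add: S_def)
    ultimately have "S \<epsilon> \<subseteq> outside P" "S (- \<epsilon>) \<subseteq> inside P"
      using elim connected_subset_outside connected_subset_inside by meson+
    then show ?case
      by (auto simp: S_def)
  qed
qed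

lemma eventually_shifted_edge_avoids_prev_edge:
  assumes k: "1 \<le> k"
  shows "\<forall>\<^sub>F \<epsilon> in at 0. closed_segment (p k + \<epsilon> *\<^sub>R (u k + u (Suc k)))
    (p (Suc k) + \<epsilon> *\<^sub>R (u (Suc k) + u (Suc (Suc k)))) \<inter> edge k = {}"
proof -
  have "\<forall>\<^sub>F \<epsilon> in at 0. closed_segment (p k + (p (Suc k) - p k) + \<epsilon> *\<^sub>R (u (Suc k) + u (Suc (Suc k))))
      (p k + \<epsilon> *\<^sub>R (u k + u (Suc k))) \<inter> {p k + l *\<^sub>R (p (k - 1) - p k) | l. 0 \<le> l} = {}"
  proof (rule shifted_segment_avoids_ray)
    show "(p (Suc k) - p k) \<bullet> u (Suc k) = 0"
      using u_orthogonal[of "Suc k"] by (simp add: inner_commute)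
    show "(p (k - 1) - p k) \<bullet> u k = 0"
      using u_orthogonal[OF k] by (simp add: inner_commute inner_diff_right)
    have reversed: "(p (k - 1) - p k) \<bullet> u (Suc k) = - ((p k - p (k - 1)) \<bullet> u (Suc k))"
      by (simp add: inner_diff_left)
    show "0 < (p (Suc k) - p k) \<bullet> u k" if "0 < (p (k - 1) - p k) \<bullet> u (Suc k)"
      using normals_consistent(2,3)[OF k] that reversed by (smt (verit))
    show "(p (Suc k) - p k) \<bullet> u k < 0" if "(p (k - 1) - p k) \<bullet> u (Suc k) < 0"
      using normals_consistent(1,3)[OF k] that reversed by (smt (verit))
  qed (use bisector_inner_pos[OF k] bisector_inner_pos[of "Suc k"] in auto)
  then show ?thesis
    using edge_subset_ray_back[of k]
    by (elim eventually_mono) (auto simp: closed_segment_commute[of "p (Suc k) + _"])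
qed

lemma eventually_shifted_edge_avoids_next_edge:
  assumes k: "1 \<le> k"
  shows "\<forall>\<^sub>F \<epsilon> in at 0. closed_segment (p k + \<epsilon> *\<^sub>R (u k + u (Suc k)))
    (p (Suc k) + \<epsilon> *\<^sub>R (u (Suc k) + u (Suc (Suc k)))) \<inter> edge (Suc (Suc k)) = {}"
proof -
  have k1: "1 \<le> Suc k"
    by simp
  have "\<forall>\<^sub>F \<epsilon> in at 0. closed_segment (p (Suc k) + (p k - p (Suc k)) + \<epsilon> *\<^sub>R (u k + u (Suc k)))
      (p (Suc k) + \<epsilon> *\<^sub>R (u (Suc k) + u (Suc (Suc k)))) \<inter>
      {p (Suc k) + l *\<^sub>R (p (Suc (Suc k)) - p (Suc k)) | l. 0 \<le> l} = {}"
  proof (rule shifted_segment_avoids_ray)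
    show "(p k - p (Suc k)) \<bullet> u (Suc k) = 0"
      using u_orthogonal[OF k1] by (simp add: inner_commute inner_diff_right)
    show "(p (Suc (Suc k)) - p (Suc k)) \<bullet> u (Suc (Suc k)) = 0"
      using u_orthogonal[of "Suc (Suc k)"] by (simp add: inner_commute)
    show "0 < (p k - p (Suc k)) \<bullet> u (Suc (Suc k))" if "0 < (p (Suc (Suc k)) - p (Suc k)) \<bullet> u (Suc k)"
      using normals_consistent(1)[OF k1] that by (simp add: inner_commute inner_diff_right)
    show "(p k - p (Suc k)) \<bullet> u (Suc (Suc k)) < 0" if "(p (Suc (Suc k)) - p (Suc k)) \<bullet> u (Suc k) < 0"
      using normals_consistent(2)[OF k1] that by (simp add: inner_commute inner_diff_right)
  qed (use bisector_inner_pos[OF k] bisector_inner_pos[OF k1] in auto)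
  then show ?thesis
    using edge_subset_ray_forward[of "Suc k"] by (elim eventually_mono) auto
qed

lemma eventually_shifted_edge_disjoint:
  assumes k: "1 \<le> k"
  shows "\<forall>\<^sub>F \<epsilon> in at 0. closed_segment (p k + \<epsilon> *\<^sub>R (u k + u (Suc k)))
    (p (Suc k) + \<epsilon> *\<^sub>R (u (Suc k) + u (Suc (Suc k)))) \<inter> P = {}"
proof (rule eventually_shifted_segment_disjoint[of "{k, Suc k, Suc (Suc k)}"])
  have k1: "1 \<le> Suc k"
    by simp
  show "closed_segment (p k) (p (Suc k)) \<inter> edge j = {}"
    if j: "1 \<le> j" "j mod n \<notin> (\<lambda>i. i mod n) ` {k, Suc k, Suc (Suc k)}" for j
  proof -
    have "closed_segment (p k) (p (Suc k)) \<inter> edge j \<subseteq> {p k, p (Suc k)}"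
      using edges_inter[OF k1 j(1)] j(2) by (auto simp: polygon_edge_def)
    moreover have "p k \<notin> edge j" "p (Suc k) \<notin> edge j"
      using vertex_notin_edge[of j k] vertex_notin_edge[of j "Suc k"] j by auto
    ultimately show ?thesis
      by blast
  qed
  have "\<forall>\<^sub>F \<epsilon> in at 0. closed_segment (p k + \<epsilon> *\<^sub>R (u k + u (Suc k)))
      (p (Suc k) + \<epsilon> *\<^sub>R (u (Suc k) + u (Suc (Suc k)))) \<inter> {y. (y - p (Suc k)) \<bullet> u (Suc k) = 0} = {}"
    using u_orthogonal[OF k1] bisector_inner_pos[OF k] bisector_inner_pos[OF k1]
    by (intro shifted_segment_off_line) (auto simp: inner_commute inner_diff_right)
  then have "\<forall>\<^sub>F \<epsilon> in at 0. closed_segment (p k + \<epsilon> *\<^sub>R (u k + u (Suc k)))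
      (p (Suc k) + \<epsilon> *\<^sub>R (u (Suc k) + u (Suc (Suc k)))) \<inter> edge (Suc k) = {}"
    using edge_subset_line[OF k1] by (auto elim!: eventually_mono)
  then show "\<forall>\<^sub>F \<epsilon> in at 0. closed_segment (p k + \<epsilon> *\<^sub>R (u k + u (Suc k)))
      (p (Suc k) + \<epsilon> *\<^sub>R (u (Suc k) + u (Suc (Suc k)))) \<inter> edge i = {}"
    if "i \<in> {k, Suc k, Suc (Suc k)}" for i
    using that eventually_shifted_edge_avoids_prev_edge[OF k]
      eventually_shifted_edge_avoids_next_edge[OF k] by auto
qed (use k in auto)

text \<open>The initial point lies on the correct side by the previous lemma, applied with \<open>v = u\<^sub>k\<close>.\<close>
lemma eventually_shifted_edge_sides:
  assumes k: "1 \<le> k"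
  shows "\<forall>\<^sub>F \<epsilon> in at_right 0.
    closed_segment (p k + \<epsilon> *\<^sub>R (u k + u (Suc k))) (p (Suc k) + \<epsilon> *\<^sub>R (u (Suc k) + u (Suc (Suc k))))
      \<subseteq> outside P \<and>
    closed_segment (p k + (- \<epsilon>) *\<^sub>R (u k + u (Suc k))) (p (Suc k) + (- \<epsilon>) *\<^sub>R (u (Suc k) + u (Suc (Suc k))))
      \<subseteq> inside P"
proof -
  define S where "S \<epsilon> = closed_segment (p k + \<epsilon> *\<^sub>R (u k + u (Suc k)))
    (p (Suc k) + \<epsilon> *\<^sub>R (u (Suc k) + u (Suc (Suc k))))" for \<epsilon>
  obtain b where b: "b \<in> rel_interior (edge k)"
    using vertex_pred_neq[OF k] open_segment_eq_empty unfolding rel_interior_edge[OF k] by blast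
  have "0 < u k \<bullet> u k"
    using norm_u[OF k] by (simp add: dot_square_norm)
  note eventually_segment_to_vertex_sides[OF k b this]
  moreover have "\<forall>\<^sub>F \<epsilon> in at_right 0. S \<epsilon> \<inter> P = {} \<and> S (- \<epsilon>) \<inter> P = {}"
    using eventually_shifted_edge_disjoint[OF k] unfolding S_def by (rule eventually_at_0_both_sides)
  ultimately show ?thesis
    unfolding S_def[symmetric]
  proof eventually_elim
    case (elim \<epsilon>)
    then have "p k + \<epsilon> *\<^sub>R (u k + u (Suc k)) \<in> outside P" "p k + (- \<epsilon>) *\<^sub>R (u k + u (Suc k)) \<in> inside P"
      by blast+
    moreover have "p k + \<delta> *\<^sub>R (u k + u (Suc k)) \<in> S \<delta>" for \<delta>
      by (simp add: S_def)
    ultimately show ?case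
      using elim connected_subset_outside connected_subset_inside connected_segment
      unfolding S_def by meson
  qed
qed

end

theorem lemma3p2:
  fixes n :: nat and p u :: "nat \<Rightarrow> real^2"
  assumes simple: "simple_closed_polygon n p"
    and u_periodic: "\<forall>i. u (i + n) = u i"
    and u_normal: "\<forall>i\<in>{1..n}. norm (u i) = 1 \<and> u i \<bullet> (p i - p (i - 1)) = 0 \<and>
        (\<forall>b\<in>rel_interior (polygon_edge p i). \<forall>\<^sub>F \<epsilon> in at_right 0.
            b + \<epsilon> *\<^sub>R u i \<in> outside (polygon n p) \<and> b - \<epsilon> *\<^sub>R u i \<in> inside (polygon n p))"
  shows
    "(\<forall>i\<in>{1..n}. \<forall>b\<in>rel_interior (polygon_edge p i). \<forall>v::real^2. v \<bullet> u i > 0 \<longrightarrow>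
        (\<forall>\<^sub>F \<epsilon> in at_right 0.
           closed_segment (b + \<epsilon> *\<^sub>R v) (p i + \<epsilon> *\<^sub>R (u i + u (i + 1))) \<subseteq> outside (polygon n p) \<and>
           closed_segment (b + (-\<epsilon>) *\<^sub>R v) (p i + (-\<epsilon>) *\<^sub>R (u i + u (i + 1))) \<subseteq> inside (polygon n p)))
     \<and>
     (\<forall>i\<in>{1..n}. \<forall>\<^sub>F \<epsilon> in at_right 0.
           closed_segment (p i + \<epsilon> *\<^sub>R (u i + u (i + 1))) (p (i + 1) + \<epsilon> *\<^sub>R (u (i + 1) + u (i + 2)))
             \<subseteq> outside (polygon n p) \<and>
           closed_segment (p i + (-\<epsilon>) *\<^sub>R (u i + u (i + 1))) (p (i + 1) + (-\<epsilon>) *\<^sub>R (u (i + 1) + u (i + 2)))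
             \<subseteq> inside (polygon n p))"
proof -
  interpret polygon_with_normals n p u
    using assms by unfold_locales
  show ?thesis
    using eventually_segment_to_vertex_sides eventually_shifted_edge_sides
    by (simp add: numeral_2_eq_2)
qed

end
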